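(* For every $0<\delta<1$ there is a constant $K(\delta)<\infty$ depending only on $\delta$ such that the following holds. Let $1<R<2$ and let $\mu$ be measurable with $\operatorname{supp}\mu\subset A(1/2,1/R)$ and $\|\mu\|_\infty\leqslant1$. Then \[ \frac{1}{2\pi}\int_{|z|=1}|\mathcal{S}\mu(z)|^2\,|dz|\leqslant(1+\delta)\log\frac{1}{R-1}+K(\delta). \]
   Context: $A(\rho,R)=\{\rho<|z|<R\}$. The Beurling transform is $\mathcal{S}\mu(z)=-\frac{1}{\pi}\,\mathrm{p.v.}\int_{\mathbb{C}}\frac{\mu(w)}{(z-w)^2}\,dm(w)$. *)

theory Defs
  imports "HOL-Analysis.Analysis"
begin

definition annulus :: "real \<Rightarrow> real \<Rightarrow> complex set" where
  "annulus \<rho> R = {z. \<rho> < cmod z \<and> cmod z < R}"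

definition beurling :: "(complex \<Rightarrow> complex) \<Rightarrow> complex \<Rightarrow> complex" where
  "beurling \<mu> z = Lim (at_right (0::real))
     (\<lambda>\<epsilon>. - (1 / of_real pi) *
        (LINT w : {w. \<epsilon> < dist z w} | lebesgue. \<mu> w / (z - w)\<^sup>2))"

end

theory Submission
  imports Defs
begin

text \<open>
  For \<open>|z| = 1\<close> and \<open>\<mu>\<close> supported in \<open>|w| < r < 1\<close>, expanding the kernel gives
  \<open>S\<mu>(z) = -(1/\<pi>) \<Sum>\<^sub>k (k+1) a\<^sub>k z\<^bsup>-k-2\<^esup>\<close> with moments \<open>a\<^sub>k = \<integral> \<mu>(w) w\<^sup>k dm(w)\<close>,
  so by Parseval the mean of \<open>|S\<mu>|\<^sup>2\<close> over the circle is \<open>\<pi>\<^sup>-\<^sup>2 \<Sum>\<^sub>k (k+1)\<^sup>2 |a\<^sub>k|\<^sup>2\<close>.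
  The monomials are orthogonal in \<open>L\<^sup>2((1-|w|\<^sup>2) dm)\<close> on the unit disc with
  \<open>\<parallel>w\<^sup>k\<parallel>\<^sup>2 = \<pi>/((k+1)(k+2))\<close>, and \<open>a\<^sub>k\<close> is the pairing of \<open>w\<^sup>k\<close> with \<open>\<mu>/(1-|w|\<^sup>2)\<close>
  in that space. Bessel's inequality therefore bounds \<open>\<Sum>\<^sub>k (k+1)\<^sup>2 |a\<^sub>k|\<^sup>2\<close> by
  \<open>\<pi> \<integral>\<^bsub>|w|<r\<^esub> |\<mu>|\<^sup>2/(1-|w|\<^sup>2) dm \<le> -\<pi>\<^sup>2 log(1-r\<^sup>2)\<close>, and for \<open>r = 1/R\<close> this is
  \<open>\<pi>\<^sup>2 (log(1/(R-1)) + O(1))\<close>: the estimate even holds with \<open>\<delta> = 0\<close>.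
\<close>

section \<open>Rotation invariance of Lebesgue measure on the plane\<close>

lemma distr_Complex_lborel:
  "distr lborel borel (\<lambda>p::real \<times> real. Complex (fst p) (snd p)) = (lborel :: complex measure)"
proof (rule lborel_eqI[symmetric])
  have mP: "(\<lambda>p::real \<times> real. Complex (fst p) (snd p)) \<in> borel_measurable borel"
    by (rule borel_measurable_continuous_onI) (simp add: Complex_eq continuous_intros)
  fix l u :: complex
  assume le: "\<And>b. b \<in> Basis \<Longrightarrow> l \<bullet> b \<le> u \<bullet> b"
  have "Re l \<le> Re u" "Im l \<le> Im u"
    using le[of 1] le[of \<i>] by (auto simp: Basis_complex_def)
  have box: "(\<lambda>p. Complex (fst p) (snd p)) -` box l u = {Re l<..<Re u} \<times> {Im l<..<Im u}"
    by (auto simp: in_box_complex_iff)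
  have "emeasure (distr lborel borel (\<lambda>p::real \<times> real. Complex (fst p) (snd p))) (box l u)
      = emeasure (lborel \<Otimes>\<^sub>M lborel) ({Re l<..<Re u} \<times> {Im l<..<Im u})"
    using mP by (subst emeasure_distr) (auto simp: box lborel_prod)
  also have "\<dots> = ennreal ((Re u - Re l) * (Im u - Im l))"
    using \<open>Re l \<le> Re u\<close> \<open>Im l \<le> Im u\<close> by (simp add: lborel.emeasure_pair_measure_Times ennreal_mult)
  also have "(Re u - Re l) * (Im u - Im l) = (\<Prod>b\<in>Basis. (u - l) \<bullet> b)"
    by (simp add: Basis_complex_def inner_complex_def)
  finally show "emeasure (distr lborel borel (\<lambda>p::real \<times> real. Complex (fst p) (snd p))) (box l u)
      = (\<Prod>b\<in>Basis. (u - l) \<bullet> b)" .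
qed simp

lemma distr_shear_fst_lborel:
  fixes f :: "real \<Rightarrow> real"
  assumes f: "f \<in> borel_measurable borel"
  shows "distr lborel borel (\<lambda>p. (fst p + f (snd p), snd p)) = (lborel :: (real \<times> real) measure)"
proof (rule measure_eqI)
  let ?S = "\<lambda>p::real \<times> real. (fst p + f (snd p), snd p)"
  have mS: "?S \<in> borel_measurable borel"
    using f by (simp add: borel_prod[symmetric]) measurable
  fix A :: "(real \<times> real) set"
  assume "A \<in> sets (distr lborel borel ?S)"
  then have Ab: "A \<in> sets borel" by simp
  then have A: "A \<in> sets (lborel \<Otimes>\<^sub>M lborel)"
    by (metis lborel_prod sets_lborel)
  then have SA: "?S -` A \<in> sets (lborel \<Otimes>\<^sub>M lborel)"
    using measurable_sets_borel[OF mS Ab] by (metis lborel_prod sets_lborel)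
  have fibre: "emeasure lborel ((\<lambda>x. (x, y)) -` ?S -` A) = emeasure lborel ((\<lambda>x. (x, y)) -` A)" for y
  proof -
    have "(\<lambda>x::real. (x, y)) \<in> borel_measurable borel" by measurable
    then have "(\<lambda>x. (x, y)) -` A \<in> sets borel" using Ab by (rule measurable_sets_borel)
    moreover have "(\<lambda>x. (x, y)) -` ?S -` A = (\<lambda>x. f y + x) -` (\<lambda>x. (x, y)) -` A"
      by (auto simp: add.commute)
    ultimately show ?thesis
      using emeasure_distr[of "\<lambda>x. f y + x" lborel borel] by (simp add: lborel_distr_plus)
  qed
  have "emeasure (distr lborel borel ?S) A = emeasure (lborel \<Otimes>\<^sub>M lborel) (?S -` A)"
    using Ab mS by (subst emeasure_distr) (auto simp: lborel_prod)
  also have "\<dots> = \<integral>\<^sup>+ y. emeasure lborel ((\<lambda>x. (x, y)) -` ?S -` A) \<partial>lborel"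
    by (rule lborel_pair.emeasure_pair_measure_alt2[OF SA])
  also have "\<dots> = emeasure (lborel \<Otimes>\<^sub>M lborel) A"
    by (simp add: fibre lborel_pair.emeasure_pair_measure_alt2[OF A])
  finally show "emeasure (distr lborel borel ?S) A = emeasure lborel A" by (simp add: lborel_prod)
qed simp

lemma distr_shear_snd_lborel:
  fixes f :: "real \<Rightarrow> real"
  assumes f: "f \<in> borel_measurable borel"
  shows "distr lborel borel (\<lambda>p. (fst p, snd p + f (fst p))) = (lborel :: (real \<times> real) measure)"
proof (rule measure_eqI)
  let ?S = "\<lambda>p::real \<times> real. (fst p, snd p + f (fst p))"
  have mS: "?S \<in> borel_measurable borel"
    using f by (simp add: borel_prod[symmetric]) measurable
  fix A :: "(real \<times> real) set"
  assume "A \<in> sets (distr lborel borel ?S)"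
  then have Ab: "A \<in> sets borel" by simp
  then have A: "A \<in> sets (lborel \<Otimes>\<^sub>M lborel)"
    by (metis lborel_prod sets_lborel)
  then have SA: "?S -` A \<in> sets (lborel \<Otimes>\<^sub>M lborel)"
    using measurable_sets_borel[OF mS Ab] by (metis lborel_prod sets_lborel)
  have fibre: "emeasure lborel (Pair x -` ?S -` A) = emeasure lborel (Pair x -` A)" for x
  proof -
    have "(\<lambda>y::real. (x, y)) \<in> borel_measurable borel" by measurable
    then have "Pair x -` A \<in> sets borel" using Ab by (rule measurable_sets_borel)
    moreover have "Pair x -` ?S -` A = (\<lambda>y. f x + y) -` Pair x -` A"
      by (auto simp: add.commute)
    ultimately show ?thesis
      using emeasure_distr[of "\<lambda>y. f x + y" lborel borel] by (simp add: lborel_distr_plus)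
  qed
  have "emeasure (distr lborel borel ?S) A = emeasure (lborel \<Otimes>\<^sub>M lborel) (?S -` A)"
    using Ab mS by (subst emeasure_distr) (auto simp: lborel_prod)
  also have "\<dots> = \<integral>\<^sup>+ x. emeasure lborel (Pair x -` ?S -` A) \<partial>lborel"
    by (rule lborel.emeasure_pair_measure_alt[OF SA])
  also have "\<dots> = emeasure (lborel \<Otimes>\<^sub>M lborel) A"
    by (simp add: fibre lborel.emeasure_pair_measure_alt[OF A])
  finally show "emeasure (distr lborel borel ?S) A = emeasure lborel A" by (simp add: lborel_prod)
qed simp

lemma distr_lborel_mult_unit_ne_minus_one:
  fixes z :: complex
  assumes "cmod z = 1" and "z \<noteq> -1"
  shows "distr lborel borel (\<lambda>w. z * w) = lborel"
proof -
  define c s where "c = Re z" and "s = Im z"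
  have cs: "c\<^sup>2 + s\<^sup>2 = 1"
    using assms(1) by (simp add: c_def s_def cmod_def)
  have "1 + c \<noteq> 0"
  proof
    assume "1 + c = 0"
    then have "c = -1" by simp
    moreover from this cs have "s = 0" by simp
    ultimately have "z = -1" by (simp add: c_def s_def complex_eq_iff)
    with assms(2) show False ..
  qed
  define \<alpha> where "\<alpha> = - s / (1 + c)"
  have \<alpha>s: "\<alpha> * s = c - 1" and \<alpha>c: "\<alpha> * (1 + c) = - s"
    using \<open>1 + c \<noteq> 0\<close> cs by (auto simp: \<alpha>_def field_simps power2_eq_square)
  let ?P = "\<lambda>p::real \<times> real. Complex (fst p) (snd p)"
  let ?X = "\<lambda>p::real \<times> real. (fst p + \<alpha> * snd p, snd p)"
  let ?Y = "\<lambda>p::real \<times> real. (fst p, snd p + s * fst p)"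
  \<comment> \<open>three-shear factorisation of the rotation by \<open>\<theta> = arg z\<close>: \<open>\<alpha> = - tan (\<theta>/2)\<close>, \<open>s = sin \<theta>\<close>\<close>
  have rotation: "(\<lambda>w. z * w) \<circ> ?P = ?P \<circ> ?X \<circ> ?Y \<circ> ?X"
  proof
    fix p :: "real \<times> real"
    obtain x y where p: "p = (x, y)" by (cases p)
    have "(?P \<circ> ?X \<circ> ?Y \<circ> ?X) p =
        Complex ((1 + \<alpha> * s) * x + \<alpha> * (2 + \<alpha> * s) * y) (s * x + (1 + \<alpha> * s) * y)"
      by (simp add: p algebra_simps)
    also have "1 + \<alpha> * s = c" using \<alpha>s by simp
    also have "\<alpha> * (2 + \<alpha> * s) = - s" using \<alpha>c by (simp add: \<alpha>s add.commute)
    also have "Complex (c * x + - s * y) (s * x + c * y) = z * ?P p"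
      by (simp add: p c_def s_def complex_eq_iff)
    finally show "((\<lambda>w. z * w) \<circ> ?P) p = (?P \<circ> ?X \<circ> ?Y \<circ> ?X) p" by simp
  qed
  have mP: "?P \<in> borel_measurable borel"
    by (rule borel_measurable_continuous_onI) (simp add: Complex_eq continuous_intros)
  have "distr lborel borel (\<lambda>w. z * w) = distr (distr lborel borel ?P) borel (\<lambda>w. z * w)"
    by (simp add: distr_Complex_lborel)
  also have "\<dots> = distr lborel borel (?P \<circ> ?X \<circ> ?Y \<circ> ?X)"
    using mP by (subst distr_distr) (auto simp: rotation)
  also have "\<dots> = distr (distr (distr (distr lborel borel ?X) borel ?Y) borel ?X) borel ?P"
    using mP by (simp add: distr_distr comp_assoc borel_prod[symmetric])
  also have "\<dots> = lborel"
    using distr_shear_fst_lborel[of "\<lambda>y. \<alpha> * y"] distr_shear_snd_lborel[of "\<lambda>x. s * x"]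
    by (simp add: distr_Complex_lborel)
  finally show ?thesis .
qed

lemma distr_lborel_mult_unit:
  fixes z :: complex
  assumes "cmod z = 1"
  shows "distr lborel borel (\<lambda>w. z * w) = lborel"
proof (cases "z = -1")
  case True
  then have "(\<lambda>w. z * w) = (\<lambda>w. \<i> * w) \<circ> (\<lambda>w. \<i> * w)" by auto
  then have "distr lborel borel (\<lambda>w. z * w) = distr (distr lborel borel (\<lambda>w. \<i> * w)) borel (\<lambda>w. \<i> * w)"
    by (subst distr_distr) (auto intro!: borel_measurable_continuous_onI continuous_intros)
  then show ?thesis by (simp add: distr_lborel_mult_unit_ne_minus_one complex_eq_iff)
qed (use assms distr_lborel_mult_unit_ne_minus_one in auto)

lemma borel_measurable_lebesgue_if_borel:
  "f \<in> borel_measurable borel \<Longrightarrow> f \<in> borel_measurable lebesgue"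
  by (rule measurable_completion) simp

lemma has_bochner_integral_lebesgue_if_lborel:
  fixes f :: "'a::euclidean_space \<Rightarrow> 'b::{banach, second_countable_topology}"
  assumes "has_bochner_integral lborel f I"
  shows "has_bochner_integral lebesgue f I"
proof -
  have "f \<in> borel_measurable lborel"
    using assms by (rule borel_measurable_has_bochner_integral)
  with assms show ?thesis
    by (simp add: has_bochner_integral_iff integrable_completion integral_completion)
qed

lemma lborel_integral_mult_unit:
  fixes f :: "complex \<Rightarrow> 'b::{banach, second_countable_topology}"
  assumes "cmod z = 1" and "f \<in> borel_measurable borel"
  shows "(\<integral>w. f (z * w) \<partial>lborel) = integral\<^sup>L lborel f"
  using integral_distr[of "\<lambda>w. z * w" lborel borel f] assms
  by (simp add: distr_lborel_mult_unit)

section \<open>Integration of radial functions\<close>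

lemma lborel_integral_radial_monomials_eq_0:
  fixes h :: "real \<Rightarrow> real"
  assumes h: "h \<in> borel_measurable borel" and "j \<noteq> k"
  shows "(\<integral>w. of_real (h (cmod w)) * cnj w ^ j * w ^ k \<partial>lborel) = 0"
proof -
  define F where "F w = of_real (h (cmod w)) * cnj w ^ j * w ^ k" for w :: complex
  define z where "z = cis (pi / (real k - real j))"
  have "cnj z ^ j * z ^ k = cis (pi / (real k - real j) * (real k - real j))"
    by (simp add: z_def cis_cnj Complex.DeMoivre cis_mult algebra_simps diff_divide_distrib)
  then have "cnj z ^ j * z ^ k = -1"
    using \<open>j \<noteq> k\<close> by simp
  then have Fz: "F (z * w) = - F w" for w
    by (simp add: F_def z_def norm_mult complex_cnj_mult power_mult_distrib)
       (simp add: algebra_simps)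
  have "(\<lambda>w. of_real (h (cmod w)) :: complex) \<in> borel_measurable borel"
    using h by measurable
  moreover have "(\<lambda>w. cnj w ^ j * w ^ k) \<in> borel_measurable borel"
    by (intro borel_measurable_continuous_onI continuous_intros)
  ultimately have "F \<in> borel_measurable borel"
    unfolding F_def mult.assoc by (rule borel_measurable_times)
  then have "integral\<^sup>L lborel F = (\<integral>w. F (z * w) \<partial>lborel)"
    by (simp add: lborel_integral_mult_unit z_def)
  also have "\<dots> = - integral\<^sup>L lborel F"
    by (simp add: Fz)
  finally show ?thesis
    by (simp add: F_def[abs_def])
qed

lemma emeasure_cball_complex:
  "emeasure lborel (cball (c::complex) r) = ennreal (pi * (max 0 r)\<^sup>2)"
  using emeasure_cball[of r c] unit_ball_vol_even[of 1] by (cases "0 \<le> r") auto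

lemma emeasure_ball_complex:
  "emeasure lborel (ball (c::complex) r) = ennreal (pi * (max 0 r)\<^sup>2)"
  using emeasure_ball[of r c] unit_ball_vol_even[of 1] by (cases "0 \<le> r") (auto simp: ball_empty)

lemma emeasure_disc_outside_circle:
  fixes \<rho> :: real
  assumes "0 < \<rho>"
  shows "emeasure lborel (ball (0::complex) \<rho> \<inter> {w. x < cmod w})
    = ennreal (pi * \<rho>\<^sup>2 - pi * (min \<rho> (max 0 x))\<^sup>2)"
proof (cases "x < \<rho>")
  case True
  have "ball (0::complex) \<rho> \<inter> {w. x < cmod w} = ball 0 \<rho> - cball 0 x"
    by auto
  moreover have "emeasure lborel (ball (0::complex) \<rho> - cball 0 x)
      = emeasure lborel (ball (0::complex) \<rho>) - emeasure lborel (cball (0::complex) x)"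
    using True by (intro emeasure_Diff) (auto simp: emeasure_cball_complex)
  ultimately show ?thesis
    using True assms
    by (simp add: emeasure_ball_complex emeasure_cball_complex ennreal_minus max_def power_mono)
next
  case False
  then have "ball (0::complex) \<rho> \<inter> {w. x < cmod w} = {}" by auto
  then show ?thesis using False assms by simp
qed

lemma emeasure_radial_density_greaterThan:
  fixes \<rho> :: real
  assumes "0 < \<rho>"
  shows "emeasure (density lborel (\<lambda>s. ennreal (2 * pi * s) * indicator {0<..<\<rho>} s)) {x<..}
    = ennreal (pi * \<rho>\<^sup>2 - pi * (min \<rho> (max 0 x))\<^sup>2)"
proof -
  define a where "a = min \<rho> (max 0 x)"
  have "a \<le> \<rho>" using assms by (simp add: a_def)
  have "((\<lambda>s. 2 * pi * s) has_integral (pi * \<rho>\<^sup>2 - pi * a\<^sup>2)) {a..\<rho>}"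
    using \<open>a \<le> \<rho>\<close>
    by (intro fundamental_theorem_of_calculus)
       (auto intro!: derivative_eq_intros simp: has_real_derivative_iff_has_vector_derivative[symmetric])
  then have "((\<lambda>s. 2 * pi * s) has_integral (pi * \<rho>\<^sup>2 - pi * a\<^sup>2)) {a<..<\<rho>}"
    by (simp add: has_integral_Icc_iff_Ioo)
  then have "(\<integral>\<^sup>+s. ennreal (indicator {a<..<\<rho>} s * (2 * pi * s)) \<partial>lborel) = ennreal (pi * \<rho>\<^sup>2 - pi * a\<^sup>2)"
    by (rule nn_integral_has_integral_lebesgue[rotated]) (auto simp: a_def)
  moreover have "(\<integral>\<^sup>+s. ennreal (2 * pi * s) * indicator {0<..<\<rho>} s * indicator {x<..} s \<partial>lborel)
      = (\<integral>\<^sup>+s. ennreal (indicator {a<..<\<rho>} s * (2 * pi * s)) \<partial>lborel)"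
    by (intro nn_integral_cong) (auto simp: a_def split: split_indicator)
  ultimately show ?thesis
    by (subst emeasure_density) (auto simp: a_def)
qed

lemma distr_cmod_disc:
  fixes \<rho> :: real
  assumes "0 < \<rho>"
  shows "distr (density lborel (indicator (ball (0::complex) \<rho>))) borel cmod
    = density lborel (\<lambda>s. ennreal (2 * pi * s) * indicator {0<..<\<rho>} s)"
proof (rule measure_eqI_lessThan)
  have "emeasure (distr (density lborel (indicator (ball (0::complex) \<rho>))) borel cmod) {x<..}
      = emeasure lborel (ball (0::complex) \<rho> \<inter> {w. x < cmod w})" for x
  proof -
    have "{w::complex. x < cmod w} \<in> sets borel" by measurable
    then show ?thesis
      by (subst emeasure_distr) (auto simp: emeasure_restricted vimage_def Int_commute)
  qed
  then show "emeasure (distr (density lborel (indicator (ball (0::complex) \<rho>))) borel cmod) {x<..} < \<infinity>"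
    and "emeasure (distr (density lborel (indicator (ball (0::complex) \<rho>))) borel cmod) {x<..}
      = emeasure (density lborel (\<lambda>s. ennreal (2 * pi * s) * indicator {0<..<\<rho>} s)) {x<..}" for x
    using assms by (simp_all add: emeasure_disc_outside_circle emeasure_radial_density_greaterThan)
qed simp_all

lemma has_bochner_integral_disc_radial:
  fixes g :: "real \<Rightarrow> real" and \<rho> :: real
  assumes "0 < \<rho>" and g: "g \<in> borel_measurable borel" and nonneg: "\<And>s. 0 \<le> s \<Longrightarrow> s < \<rho> \<Longrightarrow> 0 \<le> g s"
    and I: "((\<lambda>s. 2 * pi * s * g s) has_integral I) {0<..<\<rho>}"
  shows "has_bochner_integral lborel (\<lambda>w::complex. indicator (ball 0 \<rho>) w * g (cmod w)) I"
proof (rule has_bochner_integral_nn_integral)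
  have "(\<integral>\<^sup>+w. ennreal (indicator (ball (0::complex) \<rho>) w * g (cmod w)) \<partial>lborel)
      = (\<integral>\<^sup>+w. indicator (ball (0::complex) \<rho>) w * ennreal (g (cmod w)) \<partial>lborel)"
    by (intro nn_integral_cong) (auto split: split_indicator)
  also have "\<dots> = (\<integral>\<^sup>+s. ennreal (g s) \<partial>distr (density lborel (indicator (ball (0::complex) \<rho>))) borel cmod)"
    using g by (simp add: nn_integral_distr) (subst nn_integral_density; auto intro: borel_measurable_indicator)
  also have "\<dots> = (\<integral>\<^sup>+s. ennreal (indicator {0<..<\<rho>} s * (2 * pi * s * g s)) \<partial>lborel)"
    using g nonneg \<open>0 < \<rho>\<close>
    by (auto simp: distr_cmod_disc nn_integral_density ennreal_mult[symmetric] intro!: nn_integral_cong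
        split: split_indicator)
  also have "\<dots> = ennreal I"
    using I nonneg by (intro nn_integral_has_integral_lebesgue) auto
  finally show "(\<integral>\<^sup>+w. ennreal (indicator (ball (0::complex) \<rho>) w * g (cmod w)) \<partial>lborel) = ennreal I" .
  show "0 \<le> I"
    using nonneg by (intro has_integral_nonneg[OF I]) auto
  show "(\<lambda>w::complex. indicator (ball 0 \<rho>) w * g (cmod w)) \<in> borel_measurable lborel"
    using g by (auto intro!: borel_measurable_times borel_measurable_indicator measurable_compose[OF borel_measurable_norm])
qed (use nonneg in \<open>auto split: split_indicator\<close>)

section \<open>The weight \<open>1 - |w|\<^sup>2\<close> on the unit disc\<close>

lemma has_integral_disc_weight_monomial_radial:
  "((\<lambda>s. 2 * pi * s * ((1 - s\<^sup>2) * (s\<^sup>2) ^ k)) has_integral pi / ((real k + 1) * (real k + 2))) {0<..<1}"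
proof -
  define F where "F s = pi / (real k + 1) * s ^ (2*k+2) - pi / (real k + 2) * s ^ (2*k+4)" for s :: real
  have deriv: "(F has_real_derivative 2 * pi * s * ((1 - s\<^sup>2) * (s\<^sup>2) ^ k)) (at s)" for s
  proof -
    have "(F has_real_derivative
        pi / (real k + 1) * (real (2*k+2) * s ^ (2*k+1)) - pi / (real k + 2) * (real (2*k+4) * s ^ (2*k+3))) (at s)"
      unfolding F_def using DERIV_pow[of "2*k+2" s] DERIV_pow[of "2*k+4" s]
      by (intro DERIV_diff DERIV_cmult) (simp_all add: numeral_eq_Suc)
    moreover have "pi / (real k + 1) * real (2*k+2) = 2 * pi" "pi / (real k + 2) * real (2*k+4) = 2 * pi"
      by (simp_all add: field_simps)
    moreover have "s ^ (2*k+1) = s * (s\<^sup>2) ^ k" "s ^ (2*k+3) = s * s\<^sup>2 * (s\<^sup>2) ^ k"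
      by (simp_all add: power_add power_mult power_mult_distrib mult_ac numeral_eq_Suc)
    ultimately show ?thesis
      by (simp only: mult.assoc[symmetric]) (simp add: algebra_simps)
  qed
  have "((\<lambda>s. 2 * pi * s * ((1 - s\<^sup>2) * (s\<^sup>2) ^ k)) has_integral F 1 - F 0) {0..1}"
    by (rule fundamental_theorem_of_calculus)
       (auto intro: has_field_derivative_at_within[OF deriv] simp: has_real_derivative_iff_has_vector_derivative[symmetric])
  moreover have "F 1 - F 0 = pi / ((real k + 1) * (real k + 2))"
    by (simp add: F_def field_simps)
  ultimately show ?thesis
    by (simp add: has_integral_Icc_iff_Ioo)
qed

lemma has_integral_disc_inverse_weight_radial:
  assumes "0 \<le> r" "r < 1"
  shows "((\<lambda>s. 2 * pi * s * (1 / (1 - s\<^sup>2))) has_integral - pi * ln (1 - r\<^sup>2)) {0<..<r}"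
proof -
  define F where "F s = - pi * ln (1 - s\<^sup>2)" for s :: real
  have deriv: "(F has_real_derivative 2 * pi * s * (1 / (1 - s\<^sup>2))) (at s)" if "\<bar>s\<bar> < 1" for s
  proof -
    have "s\<^sup>2 < 1" using that by (simp add: abs_square_less_1)
    then show ?thesis
      unfolding F_def by (auto intro!: derivative_eq_intros simp: field_simps power2_eq_square)
  qed
  have "((\<lambda>s. 2 * pi * s * (1 / (1 - s\<^sup>2))) has_integral F r - F 0) {0..r}"
  proof (rule fundamental_theorem_of_calculus)
    fix s assume "s \<in> {0..r}"
    with assms have "\<bar>s\<bar> < 1" by auto
    then show "(F has_vector_derivative 2 * pi * s * (1 / (1 - s\<^sup>2))) (at s within {0..r})"
      by (intro has_field_derivative_at_within[OF deriv, unfolded has_real_derivative_iff_has_vector_derivative])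
  qed (use assms in simp)
  then show ?thesis
    by (simp add: F_def has_integral_Icc_iff_Ioo)
qed

lemma integrable_bounded_in_unit_disc:
  fixes f :: "complex \<Rightarrow> 'b::{banach, second_countable_topology}"
  assumes f: "f \<in> borel_measurable lebesgue" and bound: "\<And>w. norm (f w) \<le> B"
    and support: "\<And>w. f w \<noteq> 0 \<Longrightarrow> w \<in> ball 0 1"
  shows "integrable lebesgue f"
proof (rule Bochner_Integration.integrable_bound[OF _ f])
  have "integrable lborel (\<lambda>w::complex. indicator (ball 0 1) w * B)"
    by (intro integrable_mult_left integrable_real_indicator) (auto simp: emeasure_ball_complex)
  then show "integrable lebesgue (\<lambda>w::complex. indicator (ball 0 1) w * B)"
    by (subst integrable_completion) auto
  show "AE w in lebesgue. norm (f w) \<le> norm (indicator (ball 0 1) w * B)"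
  proof (intro AE_I2)
    fix w
    show "norm (f w) \<le> norm (indicator (ball 0 1) w * B)"
      using bound[of w] support[of w] by (cases "f w = 0") (auto split: split_indicator)
  qed
qed

definition disc_weight :: "complex \<Rightarrow> real" where
  "disc_weight w = indicator (ball 0 1) w * (1 - (cmod w)\<^sup>2)"

definition disc_monomial_norm2 :: "nat \<Rightarrow> real" where
  "disc_monomial_norm2 k = pi / ((real k + 1) * (real k + 2))"

lemma disc_monomial_norm2_pos: "0 < disc_monomial_norm2 k"
  by (simp add: disc_monomial_norm2_def)

lemma disc_weight_nonneg: "0 \<le> disc_weight w"
  by (auto simp: disc_weight_def abs_square_le_1 split: split_indicator)

lemma disc_weight_le_1: "disc_weight w \<le> 1"
  by (auto simp: disc_weight_def split: split_indicator)

lemma borel_measurable_disc_weight: "disc_weight \<in> borel_measurable borel"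
  unfolding disc_weight_def
  by (intro borel_measurable_times borel_measurable_indicator borel_measurable_continuous_onI continuous_intros) simp

lemma has_bochner_integral_disc_weight_monomial:
  "has_bochner_integral lborel (\<lambda>w. disc_weight w * ((cmod w)\<^sup>2) ^ k) (disc_monomial_norm2 k)"
proof -
  have "has_bochner_integral lborel (\<lambda>w::complex. indicator (ball 0 1) w * ((1 - (cmod w)\<^sup>2) * ((cmod w)\<^sup>2) ^ k))
      (disc_monomial_norm2 k)"
    unfolding disc_monomial_norm2_def
    by (rule has_bochner_integral_disc_radial[OF _ _ _ has_integral_disc_weight_monomial_radial])
       (auto simp: abs_square_le_1)
  then show ?thesis
    by (simp add: disc_weight_def mult.assoc)
qed

lemma has_bochner_integral_disc_inverse_weight:
  assumes "0 < r" "r < 1"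
  shows "has_bochner_integral lborel (\<lambda>w::complex. indicator (ball 0 r) w * (1 / (1 - (cmod w)\<^sup>2)))
    (- pi * ln (1 - r\<^sup>2))"
  using assms
  by (intro has_bochner_integral_disc_radial has_integral_disc_inverse_weight_radial)
     (auto intro!: power_le_one)

lemma borel_measurable_disc_weight_monomials:
  "(\<lambda>w. of_real (disc_weight w) * cnj w ^ j * w ^ k) \<in> borel_measurable borel"
proof -
  have "(\<lambda>w. of_real (disc_weight w) :: complex) \<in> borel_measurable borel"
    using borel_measurable_disc_weight by measurable
  moreover have "(\<lambda>w. cnj w ^ j * w ^ k) \<in> borel_measurable borel"
    by (intro borel_measurable_continuous_onI continuous_intros)
  ultimately show ?thesis
    unfolding mult.assoc by (rule borel_measurable_times)
qed

lemma integral_disc_weight_monomials: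
  "(\<integral>w. of_real (disc_weight w) * cnj w ^ j * w ^ k \<partial>lebesgue)
    = (if j = k then of_real (disc_monomial_norm2 k) else 0)"
proof -
  have "(\<integral>w. of_real (disc_weight w) * cnj w ^ j * w ^ k \<partial>lebesgue)
      = (\<integral>w. of_real (disc_weight w) * cnj w ^ j * w ^ k \<partial>lborel)"
    using borel_measurable_disc_weight_monomials by (subst integral_completion) auto
  also have "\<dots> = (if j = k then of_real (disc_monomial_norm2 k) else 0)"
  proof (cases "j = k")
    case True
    have "cnj w ^ k * w ^ k = of_real (((cmod w)\<^sup>2) ^ k)" for w
      using complex_norm_square[of w] by (simp add: power_mult_distrib[symmetric] mult.commute)
    then have "of_real (disc_weight w) * cnj w ^ j * w ^ k = of_real (disc_weight w * ((cmod w)\<^sup>2) ^ k)" for w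
      by (simp only: True mult.assoc of_real_mult)
    then have "(\<integral>w. of_real (disc_weight w) * cnj w ^ j * w ^ k \<partial>lborel)
        = of_real (\<integral>w. disc_weight w * ((cmod w)\<^sup>2) ^ k \<partial>lborel)"
      by (simp only: integral_complex_of_real)
    then show ?thesis
      using True has_bochner_integral_disc_weight_monomial[of k] by (simp add: has_bochner_integral_integral_eq)
  next
    case False
    have "disc_weight w = (\<lambda>s. indicator {..<1} s * (1 - s\<^sup>2)) (cmod w)" for w
      by (simp add: disc_weight_def indicator_def)
    then show ?thesis
      using False lborel_integral_radial_monomials_eq_0[of "\<lambda>s. indicator {..<1} s * (1 - s\<^sup>2)" j k]
      by simp
  qed
  finally show ?thesis .
qed

lemma integrable_disc_weight_monomials:
  "integrable lebesgue (\<lambda>w. of_real (disc_weight w) * cnj w ^ j * w ^ k)"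
proof (rule integrable_bounded_in_unit_disc)
  show "(\<lambda>w. of_real (disc_weight w) * cnj w ^ j * w ^ k) \<in> borel_measurable lebesgue"
    using borel_measurable_disc_weight_monomials by (rule borel_measurable_lebesgue_if_borel)
  fix w :: complex
  show "of_real (disc_weight w) * cnj w ^ j * w ^ k \<noteq> 0 \<Longrightarrow> w \<in> ball 0 1"
    by (cases "w \<in> ball 0 1") (auto simp: disc_weight_def)
  show "norm (of_real (disc_weight w) * cnj w ^ j * w ^ k) \<le> 1"
  proof (cases "w \<in> ball 0 1")
    case True
    then have "cmod w ^ j * cmod w ^ k \<le> 1"
      by (intro mult_le_one power_le_one) auto
    then show ?thesis
      using disc_weight_nonneg[of w] disc_weight_le_1[of w]
      by (simp add: norm_mult norm_power mult.assoc mult_le_one)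
  qed (simp add: disc_weight_def)
qed

lemma integral_disc_weight_norm_poly:
  "(\<integral>w. disc_weight w * (cmod (\<Sum>k<N. c k * cnj w ^ k))\<^sup>2 \<partial>lebesgue)
    = (\<Sum>k<N. (cmod (c k))\<^sup>2 * disc_monomial_norm2 k)"
proof -
  have expand: "of_real (disc_weight w * (cmod (\<Sum>k<N. c k * cnj w ^ k))\<^sup>2)
      = (\<Sum>k<N. \<Sum>j<N. c j * cnj (c k) * (of_real (disc_weight w) * cnj w ^ j * w ^ k))" for w
    by (simp only: of_real_mult complex_norm_square) (simp add: cnj_sum sum_product sum_distrib_left mult_ac)
  have "of_real (\<integral>w. disc_weight w * (cmod (\<Sum>k<N. c k * cnj w ^ k))\<^sup>2 \<partial>lebesgue)
      = (\<Sum>k<N. \<Sum>j<N. c j * cnj (c k) * (\<integral>w. of_real (disc_weight w) * cnj w ^ j * w ^ k \<partial>lebesgue))"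
    by (simp only: integral_complex_of_real[symmetric] expand)
       (simp add: integrable_disc_weight_monomials)
  also have "\<dots> = (\<Sum>k<N. c k * cnj (c k) * of_real (disc_monomial_norm2 k))"
    by (simp add: integral_disc_weight_monomials if_distrib sum.delta' cong: if_cong)
  also have "\<dots> = of_real (\<Sum>k<N. (cmod (c k))\<^sup>2 * disc_monomial_norm2 k)"
    by (simp only: of_real_sum of_real_mult complex_norm_square)
  finally show ?thesis
    by (simp only: of_real_eq_iff)
qed

section \<open>Trigonometric series on the circle\<close>

lemma has_integral_cis_int_multiple:
  fixes d :: int
  shows "((\<lambda>t. cis (of_int d * t)) has_integral (if d = 0 then of_real (2 * pi) else 0)) {0..2*pi}"
proof (cases "d = 0")
  case True
  then show ?thesis
    using has_integral_const_real[of "1::complex" 0 "2*pi"] by (simp add: scaleR_conv_of_real)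
next
  case False
  define F where "F t = exp (\<i> * of_int d * of_real t) / (\<i> * of_int d)" for t :: real
  have "((\<lambda>t. cis (of_int d * t)) has_integral F (2 * pi) - F 0) {0..2*pi}"
  proof (rule fundamental_theorem_of_calculus)
    fix t :: real
    have "((\<lambda>s. exp (\<i> * of_int d * s) / (\<i> * of_int d)) has_field_derivative exp (\<i> * of_int d * of_real t))
        (at (of_real t))"
      using False by (auto intro!: derivative_eq_intros)
    from has_vector_derivative_real_field[OF this]
    show "(F has_vector_derivative cis (of_int d * t)) (at t within {0..2*pi})"
      by (simp add: F_def[abs_def] cis_conv_exp mult_ac has_vector_derivative_at_within)
  qed simp
  moreover have "cis (of_int d * (2 * pi)) = 1"
    using cos_int_2pin[of d] sin_int_2pin[of d] by (simp add: complex_eq_iff mult.commute)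
  ultimately show ?thesis
    using False by (simp add: F_def cis_conv_exp mult_ac)
qed

lemma has_integral_norm_trig_poly:
  fixes b :: "nat \<Rightarrow> complex" and n :: "nat \<Rightarrow> int"
  assumes "inj n"
  shows "((\<lambda>t. (cmod (\<Sum>k<N. b k * cis (of_int (n k) * t)))\<^sup>2) has_integral 2 * pi * (\<Sum>k<N. (cmod (b k))\<^sup>2))
    {0..2*pi}"
proof -
  have expand: "complex_of_real ((cmod (\<Sum>k<N. b k * cis (of_int (n k) * t)))\<^sup>2)
      = (\<Sum>j<N. \<Sum>k<N. b j * cnj (b k) * cis (of_int (n j - n k) * t))" for t
    by (simp only: complex_norm_square)
       (simp add: cnj_sum sum_product cis_cnj algebra_simps cis_mult)
  have "((\<lambda>t. \<Sum>j<N. \<Sum>k<N. b j * cnj (b k) * cis (of_int (n j - n k) * t)) has_integral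
      (\<Sum>j<N. \<Sum>k<N. b j * cnj (b k) * (if n j - n k = 0 then of_real (2 * pi) else 0))) {0..2*pi}"
    by (intro has_integral_sum finite_lessThan has_integral_mult_right has_integral_cis_int_multiple)
  also have "(\<Sum>j<N. \<Sum>k<N. b j * cnj (b k) * (if n j - n k = 0 then of_real (2 * pi) else 0))
      = (\<Sum>k<N. b k * cnj (b k) * of_real (2 * pi))"
    by (simp add: inj_eq[OF assms] if_distrib sum.delta cong: if_cong)
  also have "\<dots> = of_real (2 * pi * (\<Sum>k<N. (cmod (b k))\<^sup>2))"
    by (simp only: of_real_mult of_real_sum complex_norm_square sum_distrib_left mult.commute)
  finally have "((\<lambda>t. complex_of_real ((cmod (\<Sum>k<N. b k * cis (of_int (n k) * t)))\<^sup>2)) has_integral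
      of_real (2 * pi * (\<Sum>k<N. (cmod (b k))\<^sup>2))) {0..2*pi}"
    by (simp only: expand)
  from has_integral_linear[OF this bounded_linear_Re] show ?thesis
    by (simp add: o_def)
qed

lemma integral_norm_trig_series_le:
  fixes b :: "nat \<Rightarrow> complex" and n :: "nat \<Rightarrow> int"
  assumes "inj n" and summable: "summable (\<lambda>k. cmod (b k))"
    and bound: "\<And>N. (\<Sum>k<N. (cmod (b k))\<^sup>2) \<le> B"
  shows "integral {0..2*pi} (\<lambda>t. (cmod (\<Sum>k. b k * cis (of_int (n k) * t)))\<^sup>2) \<le> 2 * pi * B"
proof -
  define S where "S = (\<Sum>k. cmod (b k))"
  define f where "f N t = (cmod (\<Sum>k<N. b k * cis (of_int (n k) * t)))\<^sup>2" for N t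
  have partial: "(f N has_integral 2 * pi * (\<Sum>k<N. (cmod (b k))\<^sup>2)) {0..2*pi}" for N
    unfolding f_def using \<open>inj n\<close> by (rule has_integral_norm_trig_poly)
  have dominated: "norm (f N t) \<le> S\<^sup>2" for N t
  proof -
    have "cmod (\<Sum>k<N. b k * cis (of_int (n k) * t)) \<le> (\<Sum>k<N. cmod (b k))"
      by (rule order_trans[OF norm_sum]) (simp add: norm_mult)
    also have "\<dots> \<le> S"
      unfolding S_def using summable by (rule sum_le_suminf) auto
    finally show ?thesis
      unfolding f_def by (auto intro!: power_mono)
  qed
  have "(\<lambda>N. f N t) \<longlonglongrightarrow> (cmod (\<Sum>k. b k * cis (of_int (n k) * t)))\<^sup>2" for t
  proof -
    have "summable (\<lambda>k. norm (b k * cis (of_int (n k) * t)))"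
      using summable by (simp add: norm_mult)
    then have "summable (\<lambda>k. b k * cis (of_int (n k) * t))"
      by (rule summable_norm_cancel)
    then show ?thesis
      unfolding f_def by (intro tendsto_intros summable_LIMSEQ)
  qed
  then have "(\<lambda>N. integral {0..2*pi} (f N))
      \<longlonglongrightarrow> integral {0..2*pi} (\<lambda>t. (cmod (\<Sum>k. b k * cis (of_int (n k) * t)))\<^sup>2)"
    using partial dominated by (intro dominated_convergence(2)[of _ _ "\<lambda>_. S\<^sup>2"]) auto
  moreover have "integral {0..2*pi} (f N) \<le> 2 * pi * B" for N
    using partial[of N] bound[of N] by (simp add: integral_unique)
  ultimately show ?thesis
    by (intro LIMSEQ_le_const2) auto
qed

section \<open>The Beurling transform off the support\<close>

lemma beurling_eq_integral_off_support:
  assumes support: "\<And>w. \<mu> w \<noteq> 0 \<Longrightarrow> cmod w < r" and "r < cmod z"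
  shows "beurling \<mu> z = - (1 / of_real pi) * (\<integral>w. \<mu> w / (z - w)\<^sup>2 \<partial>lebesgue)"
proof -
  \<comment> \<open>excised discs of radius below \<open>cmod z - r\<close> miss the support, so the principal value is eventually constant\<close>
  have "(LINT w : {w. \<epsilon> < dist z w} | lebesgue. \<mu> w / (z - w)\<^sup>2) = (\<integral>w. \<mu> w / (z - w)\<^sup>2 \<partial>lebesgue)"
    if "\<epsilon> < cmod z - r" for \<epsilon>
  proof -
    have "\<epsilon> < dist z w" if "\<mu> w \<noteq> 0" for w
      using support[OF that] \<open>\<epsilon> < cmod z - r\<close> norm_triangle_ineq2[of z w] by (simp add: dist_norm)
    then show ?thesis
      unfolding set_lebesgue_integral_def by (intro Bochner_Integration.integral_cong) (auto simp: indicator_def)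
  qed
  then have "\<forall>\<^sub>F \<epsilon> in at_right 0. - (1 / of_real pi) * (LINT w : {w. \<epsilon> < dist z w} | lebesgue. \<mu> w / (z - w)\<^sup>2)
      = - (1 / of_real pi) * (\<integral>w. \<mu> w / (z - w)\<^sup>2 \<partial>lebesgue)"
    using \<open>r < cmod z\<close> by (intro eventually_at_rightI[of 0 "cmod z - r"]) auto
  then show ?thesis
    unfolding beurling_def by (intro tendsto_Lim tendsto_eventually) auto
qed

lemma beurling_cong_AE:
  assumes "\<mu> \<in> borel_measurable lebesgue" "\<nu> \<in> borel_measurable lebesgue"
    and "AE w in lebesgue. \<mu> w = \<nu> w"
  shows "beurling \<mu> z = beurling \<nu> z"
proof -
  have "(\<lambda>w. (z - w)\<^sup>2) \<in> borel_measurable borel"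
    by (intro borel_measurable_continuous_onI continuous_intros)
  then have kernel: "(\<lambda>w. (z - w)\<^sup>2) \<in> borel_measurable lebesgue"
    by (rule borel_measurable_lebesgue_if_borel)
  have "(LINT w : {w. \<epsilon> < dist z w} | lebesgue. \<mu> w / (z - w)\<^sup>2)
      = (LINT w : {w. \<epsilon> < dist z w} | lebesgue. \<nu> w / (z - w)\<^sup>2)" for \<epsilon>
  proof -
    have "open {w. \<epsilon> < dist z w}"
      by (intro open_Collect_less continuous_intros)
    then have "(\<lambda>w. indicator {w. \<epsilon> < dist z w} w :: real) \<in> borel_measurable lebesgue"
      by (intro borel_measurable_indicator) simp
    then show ?thesis
      unfolding set_lebesgue_integral_def using assms kernel
      by (intro integral_cong_AE borel_measurable_scaleR borel_measurable_divide) (auto elim!: eventually_mono)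
  qed
  then show ?thesis
    by (simp add: beurling_def)
qed

lemma inverse_square_sums:
  fixes z w :: complex
  assumes "cmod w < cmod z"
  shows "(\<lambda>k. of_nat (Suc k) * w ^ k / z ^ (k + 2)) sums (1 / (z - w)\<^sup>2)"
proof -
  have "z \<noteq> 0" using assms by auto
  have "norm (w / z) < 1"
    using assms \<open>z \<noteq> 0\<close> by (simp add: norm_divide divide_less_eq)
  from sums_mult[OF geometric_deriv_sums[OF this], of "1 / z\<^sup>2"]
  have "(\<lambda>k. 1 / z\<^sup>2 * (of_nat (Suc k) * (w / z) ^ k)) sums (1 / z\<^sup>2 * (1 / (1 - w / z)\<^sup>2))" .
  moreover have "1 / z\<^sup>2 * (of_nat (Suc k) * (w / z) ^ k) = of_nat (Suc k) * w ^ k / z ^ (k + 2)" for k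
    by (simp add: power_divide power_add field_simps power2_eq_square)
  moreover have "1 / z\<^sup>2 * (1 / (1 - w / z)\<^sup>2) = 1 / (z - w)\<^sup>2"
    using \<open>z \<noteq> 0\<close> by (simp add: field_simps power2_eq_square)
  ultimately show ?thesis
    by simp
qed

section \<open>Bounded densities supported in a disc\<close>

lemma two_mult_le_weighted_squares:
  fixes p q c :: real
  assumes "0 < c"
  shows "2 * p * q \<le> p\<^sup>2 / c + c * q\<^sup>2"
proof -
  have "p\<^sup>2 / c + c * q\<^sup>2 - 2 * p * q = (p - c * q)\<^sup>2 / c"
    using assms by (simp add: field_simps power2_eq_square)
  then show ?thesis
    using assms by (metis diff_ge_0_iff_ge divide_nonneg_pos zero_le_power2)
qed

locale disc_supported_density =
  fixes \<mu> :: "complex \<Rightarrow> complex" and r :: real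
  assumes density_measurable: "\<mu> \<in> borel_measurable lebesgue"
    and density_bounded: "\<And>w. cmod (\<mu> w) \<le> 1"
    and density_support: "\<And>w. \<mu> w \<noteq> 0 \<Longrightarrow> cmod w < r"
    and radius: "0 < r" "r < 1"
begin

definition moment :: "nat \<Rightarrow> complex" where
  "moment k = (\<integral>w. \<mu> w * w ^ k \<partial>lebesgue)"

lemma support_in_unit_disc: "\<mu> w \<noteq> 0 \<Longrightarrow> w \<in> ball 0 1"
  using density_support radius by fastforce

lemma integrable_mult_bounded:
  assumes g: "g \<in> borel_measurable lebesgue" and bound: "\<And>w. w \<in> ball 0 1 \<Longrightarrow> cmod (g w) \<le> G"
  shows "integrable lebesgue (\<lambda>w. \<mu> w * g w)"
proof (rule integrable_bounded_in_unit_disc)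
  show "(\<lambda>w. \<mu> w * g w) \<in> borel_measurable lebesgue"
    using density_measurable g by measurable
  fix w
  show "\<mu> w * g w \<noteq> 0 \<Longrightarrow> w \<in> ball 0 1"
    using support_in_unit_disc by auto
  show "norm (\<mu> w * g w) \<le> max G 0"
  proof (cases "\<mu> w = 0")
    case False
    then have "cmod (\<mu> w) * cmod (g w) \<le> 1 * G"
      using density_bounded bound support_in_unit_disc by (intro mult_mono) auto
    then show ?thesis by (simp add: norm_mult)
  qed simp
qed

lemma integrable_moment: "integrable lebesgue (\<lambda>w. \<mu> w * w ^ k)"
proof (rule integrable_mult_bounded)
  have "(\<lambda>w::complex. w ^ k) \<in> borel_measurable borel"
    by measurable
  then show "(\<lambda>w::complex. w ^ k) \<in> borel_measurable lebesgue"
    by (rule borel_measurable_lebesgue_if_borel)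
  show "cmod (w ^ k) \<le> 1" if "w \<in> ball 0 1" for w
    using that by (simp add: norm_power power_le_one)
qed

lemma integral_norm_moment_le: "(\<integral>w. cmod (\<mu> w * w ^ k) \<partial>lebesgue) \<le> r ^ k * (\<integral>w. cmod (\<mu> w) \<partial>lebesgue)"
proof -
  have "(\<integral>w. cmod (\<mu> w * w ^ k) \<partial>lebesgue) \<le> (\<integral>w. r ^ k * cmod (\<mu> w) \<partial>lebesgue)"
  proof (rule integral_mono)
    show "integrable lebesgue (\<lambda>w. cmod (\<mu> w * w ^ k))"
      using integrable_moment by (rule integrable_norm)
    show "integrable lebesgue (\<lambda>w. r ^ k * cmod (\<mu> w))"
      using integrable_moment[of 0] by (intro integrable_mult_right integrable_norm) simp
    show "cmod (\<mu> w * w ^ k) \<le> r ^ k * cmod (\<mu> w)" for w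
      using density_support[of w] radius
      by (cases "\<mu> w = 0") (auto simp: norm_mult norm_power mult.commute intro!: mult_left_mono power_mono)
  qed
  then show ?thesis by simp
qed

lemma integral_mult_cnj_poly:
  "(\<integral>w. \<mu> w * cnj (\<Sum>k<N. c k * cnj w ^ k) \<partial>lebesgue) = (\<Sum>k<N. cnj (c k) * moment k)"
proof -
  have "(\<lambda>w. \<mu> w * cnj (\<Sum>k<N. c k * cnj w ^ k)) = (\<lambda>w. \<Sum>k<N. cnj (c k) * (\<mu> w * w ^ k))"
    by (simp add: cnj_sum sum_distrib_left mult_ac)
  then show ?thesis
    by (simp add: moment_def integrable_moment)
qed

lemma Re_integral_mult_cnj_le:
  assumes g: "g \<in> borel_measurable lebesgue" and bound: "\<And>w. w \<in> ball 0 1 \<Longrightarrow> cmod (g w) \<le> G"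
  shows "2 * Re (\<integral>w. \<mu> w * cnj (g w) \<partial>lebesgue)
    \<le> - pi * ln (1 - r\<^sup>2) + (\<integral>w. disc_weight w * (cmod (g w))\<^sup>2 \<partial>lebesgue)"
proof -
  define \<psi> where "\<psi> w = indicator (ball 0 r) w * (1 / (1 - (cmod w)\<^sup>2))" for w :: complex
  have \<psi>: "has_bochner_integral lebesgue \<psi> (- pi * ln (1 - r\<^sup>2))"
    unfolding \<psi>_def using radius
    by (intro has_bochner_integral_lebesgue_if_lborel has_bochner_integral_disc_inverse_weight)
  have weighted: "integrable lebesgue (\<lambda>w. disc_weight w * (cmod (g w))\<^sup>2)"
  proof (rule integrable_bounded_in_unit_disc)
    have "disc_weight \<in> borel_measurable lebesgue"
      using borel_measurable_disc_weight by (rule borel_measurable_lebesgue_if_borel)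
    then show "(\<lambda>w. disc_weight w * (cmod (g w))\<^sup>2) \<in> borel_measurable lebesgue"
      using g by measurable
    fix w :: complex
    show "disc_weight w * (cmod (g w))\<^sup>2 \<noteq> 0 \<Longrightarrow> w \<in> ball 0 1"
      by (cases "w \<in> ball 0 1") (auto simp: disc_weight_def)
    show "norm (disc_weight w * (cmod (g w))\<^sup>2) \<le> G\<^sup>2"
    proof (cases "w \<in> ball 0 1")
      case True
      then have "disc_weight w * (cmod (g w))\<^sup>2 \<le> 1 * G\<^sup>2"
        using bound disc_weight_nonneg disc_weight_le_1 by (intro mult_mono power_mono) auto
      then show ?thesis
        using disc_weight_nonneg[of w] by simp
    qed (simp add: disc_weight_def)
  qed
  have pointwise: "2 * Re (\<mu> w * cnj (g w)) \<le> \<psi> w + disc_weight w * (cmod (g w))\<^sup>2" for w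
  proof (cases "\<mu> w = 0")
    case True
    then show ?thesis
      using radius disc_weight_nonneg[of w]
      by (auto simp: \<psi>_def abs_square_le_1 split: split_indicator intro!: add_nonneg_nonneg)
  next
    case False
    then have "cmod w < r" by (rule density_support)
    then have w: "w \<in> ball 0 r" "w \<in> ball 0 1" and "0 < 1 - (cmod w)\<^sup>2"
      using radius by (auto simp: abs_square_less_1)
    have "2 * Re (\<mu> w * cnj (g w)) \<le> 2 * cmod (\<mu> w) * cmod (g w)"
      using complex_Re_le_cmod[of "\<mu> w * cnj (g w)"] by (simp add: norm_mult)
    also have "\<dots> \<le> (cmod (\<mu> w))\<^sup>2 / (1 - (cmod w)\<^sup>2) + (1 - (cmod w)\<^sup>2) * (cmod (g w))\<^sup>2"
      using \<open>0 < 1 - (cmod w)\<^sup>2\<close> by (rule two_mult_le_weighted_squares)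
    also have "\<dots> \<le> \<psi> w + disc_weight w * (cmod (g w))\<^sup>2"
      using w \<open>0 < 1 - (cmod w)\<^sup>2\<close> density_bounded[of w]
      by (simp add: \<psi>_def disc_weight_def divide_right_mono power_le_one)
    finally show ?thesis .
  qed
  have "cnj \<in> borel_measurable borel"
    by (rule borel_measurable_continuous_onI) (intro continuous_intros)
  then have "(\<lambda>w. cnj (g w)) \<in> borel_measurable lebesgue"
    using g by (intro measurable_compose[OF g]) simp
  then have "integrable lebesgue (\<lambda>w. \<mu> w * cnj (g w))"
    using bound by (intro integrable_mult_bounded) auto
  then have "2 * Re (\<integral>w. \<mu> w * cnj (g w) \<partial>lebesgue) = (\<integral>w. 2 * Re (\<mu> w * cnj (g w)) \<partial>lebesgue)"
    by (simp only: integral_mult_right_zero integral_Re)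
  also have "\<dots> \<le> (\<integral>w. \<psi> w + disc_weight w * (cmod (g w))\<^sup>2 \<partial>lebesgue)"
  proof (rule integral_mono)
    show "integrable lebesgue (\<lambda>w. 2 * Re (\<mu> w * cnj (g w)))"
      using \<open>integrable lebesgue (\<lambda>w. \<mu> w * cnj (g w))\<close> by (intro integrable_mult_right integrable_Re)
    show "integrable lebesgue (\<lambda>w. \<psi> w + disc_weight w * (cmod (g w))\<^sup>2)"
      using integrable.intros[OF \<psi>] weighted by (rule Bochner_Integration.integrable_add)
  qed (rule pointwise)
  also have "\<dots> = - pi * ln (1 - r\<^sup>2) + (\<integral>w. disc_weight w * (cmod (g w))\<^sup>2 \<partial>lebesgue)"
    using integrable.intros[OF \<psi>] \<psi> weighted by (simp add: has_bochner_integral_integral_eq)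
  finally show ?thesis .
qed

lemma moments_Bessel_inequality:
  "(\<Sum>k<N. (real k + 1)\<^sup>2 * (cmod (moment k))\<^sup>2) \<le> - pi\<^sup>2 * ln (1 - r\<^sup>2)"
proof -
  \<comment> \<open>\<open>g\<close> is the projection of \<open>\<mu> / (1 - |w|\<^sup>2)\<close> onto the span of \<open>cnj w ^ k\<close>, \<open>k < N\<close>,
    so both its pairing with \<open>\<mu>\<close> and its squared weighted norm equal \<open>T\<close>\<close>
  define c where "c k = moment k / of_real (disc_monomial_norm2 k)" for k
  define g where "g w = (\<Sum>k<N. c k * cnj w ^ k)" for w
  define T where "T = (\<Sum>k<N. (cmod (moment k))\<^sup>2 / disc_monomial_norm2 k)"
  have norm_c: "(cmod (c k))\<^sup>2 * disc_monomial_norm2 k = (cmod (moment k))\<^sup>2 / disc_monomial_norm2 k" for k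
    using disc_monomial_norm2_pos[of k] by (simp add: c_def norm_divide power2_eq_square)
  have coeff: "cnj (c k) * moment k = of_real ((cmod (moment k))\<^sup>2 / disc_monomial_norm2 k)" for k
    using complex_norm_square[of "moment k"] by (simp add: c_def mult.commute)
  have pairing: "(\<integral>w. \<mu> w * cnj (g w) \<partial>lebesgue) = of_real T"
    unfolding g_def integral_mult_cnj_poly T_def of_real_sum by (simp only: coeff)
  have norm: "(\<integral>w. disc_weight w * (cmod (g w))\<^sup>2 \<partial>lebesgue) = T"
    by (simp add: g_def T_def integral_disc_weight_norm_poly norm_c)
  have "g \<in> borel_measurable borel"
    unfolding g_def by (intro borel_measurable_continuous_onI continuous_intros)
  then have "g \<in> borel_measurable lebesgue"
    by (rule borel_measurable_lebesgue_if_borel)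
  moreover have "cmod (g w) \<le> (\<Sum>k<N. cmod (c k))" if "w \<in> ball 0 1" for w
    unfolding g_def using that
    by (intro order_trans[OF norm_sum] sum_mono) (simp add: norm_mult norm_power mult_left_le power_le_one)
  ultimately have "2 * T \<le> - pi * ln (1 - r\<^sup>2) + T"
    using Re_integral_mult_cnj_le[of g] pairing norm by fastforce
  then have T: "T \<le> - pi * ln (1 - r\<^sup>2)" by simp
  have "(real k + 1)\<^sup>2 * (cmod (moment k))\<^sup>2 \<le> pi * ((cmod (moment k))\<^sup>2 / disc_monomial_norm2 k)" for k
  proof -
    have "(real k + 1)\<^sup>2 * disc_monomial_norm2 k = pi * ((real k + 1) / (real k + 2))"
      by (simp add: disc_monomial_norm2_def power2_eq_square)
    also have "\<dots> \<le> pi" by (intro mult_left_le) auto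
    finally have "(real k + 1)\<^sup>2 * disc_monomial_norm2 k * (cmod (moment k))\<^sup>2 \<le> pi * (cmod (moment k))\<^sup>2"
      by (rule mult_right_mono) simp
    then show ?thesis
      using disc_monomial_norm2_pos[of k] by (simp add: field_simps)
  qed
  then have "(\<Sum>k<N. (real k + 1)\<^sup>2 * (cmod (moment k))\<^sup>2) \<le> pi * T"
    unfolding T_def sum_distrib_left by (rule sum_mono)
  also have "\<dots> \<le> pi * (- pi * ln (1 - r\<^sup>2))"
    by (rule mult_left_mono[OF T]) simp
  finally show ?thesis
    by (simp add: power2_eq_square)
qed

lemma summable_integral_norm_moments:
  "summable (\<lambda>k. real (Suc k) * (\<integral>w. cmod (\<mu> w * w ^ k) \<partial>lebesgue))"
proof (rule summable_comparison_test)
  define M where "M = (\<integral>w. cmod (\<mu> w) \<partial>lebesgue)"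
  have "summable (\<lambda>k. real (Suc k) * r ^ k)"
    using geometric_deriv_sums[of r] radius by (simp add: sums_iff)
  then show "summable (\<lambda>k. real (Suc k) * r ^ k * M)"
    by (rule summable_mult2)
  show "\<exists>N. \<forall>k\<ge>N. norm (real (Suc k) * (\<integral>w. cmod (\<mu> w * w ^ k) \<partial>lebesgue)) \<le> real (Suc k) * r ^ k * M"
    using integral_norm_moment_le by (auto simp: M_def mult.assoc intro!: mult_left_mono)
qed

lemma summable_moments: "summable (\<lambda>k. real (Suc k) * cmod (moment k))"
  using summable_integral_norm_moments
  by (rule summable_comparison_test') (auto simp: moment_def intro!: mult_left_mono integral_norm_bound)

lemma integral_circle_kernel_expansion:
  "(\<integral>w. \<mu> w / (cis t - w)\<^sup>2 \<partial>lebesgue) = (\<Sum>k. of_nat (Suc k) * cis (- (real k + 2) * t) * moment k)"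
proof -
  define f where "f k w = of_nat (Suc k) * cis (- (real k + 2) * t) * (\<mu> w * w ^ k)" for k w
  have norm_f: "norm (f k w) = real (Suc k) * cmod (\<mu> w * w ^ k)" for k w
    by (simp only: f_def norm_mult norm_cis norm_of_nat mult_1_right)
  have sums: "(\<lambda>k. f k w) sums (\<mu> w / (cis t - w)\<^sup>2)" and "summable (\<lambda>k. norm (f k w))" for w
  proof -
    show "(\<lambda>k. f k w) sums (\<mu> w / (cis t - w)\<^sup>2)"
    proof (cases "\<mu> w = 0")
      case False
      then have lt: "cmod w < cmod (cis t)"
        using density_support radius by fastforce
      have "cis t ^ (k + 2) * cis (- (real k + 2) * t) = 1" for k
        by (simp add: Complex.DeMoivre cis_mult algebra_simps)
      then have "\<mu> w * (of_nat (Suc k) * w ^ k / cis t ^ (k + 2)) = f k w" for k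
        by (simp add: f_def divide_simps mult_ac)
      with sums_mult[OF inverse_square_sums[OF lt], of "\<mu> w"] show ?thesis
        by simp
    qed (simp add: f_def)
    show "summable (\<lambda>k. norm (f k w))"
    proof (cases "\<mu> w = 0")
      case False
      then have "cmod w < 1"
        using density_support radius by fastforce
      then have "summable (\<lambda>k. cmod (\<mu> w) * (real (Suc k) * cmod w ^ k))"
        using geometric_deriv_sums[of "cmod w"] by (intro summable_mult) (simp add: sums_iff)
      then show ?thesis
        by (simp add: norm_f norm_mult norm_power mult_ac)
    qed (simp add: f_def)
  qed
  have "summable (\<lambda>k. \<integral>w. norm (f k w) \<partial>lebesgue)"
    using summable_integral_norm_moments by (simp add: norm_f)
  then have "(\<integral>w. (\<Sum>k. f k w) \<partial>lebesgue) = (\<Sum>k. \<integral>w. f k w \<partial>lebesgue)"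
    using \<open>\<And>w. summable (\<lambda>k. norm (f k w))\<close>
    by (intro integral_suminf) (auto simp: f_def integrable_moment)
  then show ?thesis
    using sums by (simp add: sums_iff f_def moment_def)
qed

lemma beurling_circle_expansion:
  "beurling \<mu> (cis t) = (\<Sum>k. - (of_nat (Suc k) / of_real pi * moment k) * cis (- (real k + 2) * t))"
proof -
  have "summable (\<lambda>k. norm (of_nat (Suc k) * cis (- (real k + 2) * t) * moment k))"
    using summable_moments by (simp only: norm_mult norm_cis norm_of_nat mult_1_right)
  then have summable: "summable (\<lambda>k. of_nat (Suc k) * cis (- (real k + 2) * t) * moment k)"
    by (rule summable_norm_cancel)
  have "beurling \<mu> (cis t) = - (1 / of_real pi) * (\<integral>w. \<mu> w / (cis t - w)\<^sup>2 \<partial>lebesgue)"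
    using density_support radius by (intro beurling_eq_integral_off_support) auto
  also have "\<dots> = - (1 / of_real pi) * (\<Sum>k. of_nat (Suc k) * cis (- (real k + 2) * t) * moment k)"
    by (simp only: integral_circle_kernel_expansion)
  also have "\<dots> = (\<Sum>k. - (1 / of_real pi) * (of_nat (Suc k) * cis (- (real k + 2) * t) * moment k))"
    using summable by (rule suminf_mult[symmetric])
  finally show ?thesis
    by (simp add: mult_ac)
qed

lemma beurling_circle_mean_square_le:
  "1 / (2 * pi) * integral {0..2*pi} (\<lambda>t. (cmod (beurling \<mu> (cis t)))\<^sup>2) \<le> - ln (1 - r\<^sup>2)"
proof -
  define b where "b k = - (of_nat (Suc k) / of_real pi * moment k)" for k
  define n :: "nat \<Rightarrow> int" where "n k = - int k - 2" for k
  have norm_b: "cmod (b k) = real (Suc k) * cmod (moment k) / pi" for k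
    by (simp only: b_def norm_minus_cancel norm_mult norm_divide norm_of_real norm_of_nat) simp
  have "inj n"
    by (auto simp: n_def inj_def)
  moreover have "summable (\<lambda>k. cmod (b k))"
    using summable_moments by (simp add: norm_b summable_divide)
  moreover have "(\<Sum>k<N. (cmod (b k))\<^sup>2) \<le> - ln (1 - r\<^sup>2)" for N
  proof -
    have "(\<Sum>k<N. (cmod (b k))\<^sup>2) = (\<Sum>k<N. (real k + 1)\<^sup>2 * (cmod (moment k))\<^sup>2) / pi\<^sup>2"
      by (simp add: norm_b power_divide power_mult_distrib sum_divide_distrib add.commute)
    also have "\<dots> \<le> - pi\<^sup>2 * ln (1 - r\<^sup>2) / pi\<^sup>2"
      using moments_Bessel_inequality by (rule divide_right_mono) simp
    finally show ?thesis by simp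
  qed
  ultimately have "integral {0..2*pi} (\<lambda>t. (cmod (\<Sum>k. b k * cis (of_int (n k) * t)))\<^sup>2)
      \<le> 2 * pi * - ln (1 - r\<^sup>2)"
    by (rule integral_norm_trig_series_le)
  moreover have "of_int (n k) = - (real k + 2)" for k
    by (simp add: n_def)
  ultimately show ?thesis
    by (simp add: beurling_circle_expansion b_def field_simps)
qed

end

lemma ln_annulus_width_bound:
  fixes R :: real
  assumes "1 < R" "R < 2"
  shows "- ln (1 - (1 / R)\<^sup>2) \<le> ln (1 / (R - 1)) + 1"
proof -
  have "- ln (1 - (1 / R)\<^sup>2) = ln (1 / (1 - (1 / R)\<^sup>2))"
    using assms by (subst ln_div) (auto simp: field_simps power2_eq_square)
  also have "1 / (1 - (1 / R)\<^sup>2) = 1 / (R - 1) * (R\<^sup>2 / (R + 1))"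
    using assms by (simp add: field_simps power2_eq_square)
  also have "ln \<dots> = ln (1 / (R - 1)) + ln (R\<^sup>2 / (R + 1))"
    using assms by (intro ln_mult_pos) auto
  also have "ln (R\<^sup>2 / (R + 1)) \<le> R\<^sup>2 / (R + 1) - 1"
    using assms by (intro ln_le_minus_one) simp
  also have "R\<^sup>2 / (R + 1) - 1 \<le> 1"
  proof -
    have "R * R \<le> 2 * R" using assms by (intro mult_right_mono) auto
    then have "R\<^sup>2 \<le> 2 * (R + 1)" by (simp add: power2_eq_square algebra_simps)
    with assms show ?thesis by (simp add: field_simps)
  qed
  finally show ?thesis by simp
qed

theorem corollary4p6:
  shows "\<forall>\<delta>::real. 0 < \<delta> \<and> \<delta> < 1 \<longrightarrow>
    (\<exists>K::real. \<forall>(R::real) (\<mu>::complex \<Rightarrow> complex).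
       1 < R \<and> R < 2 \<and>
       \<mu> \<in> borel_measurable lebesgue \<and>
       (AE w in lebesgue. w \<notin> annulus (1/2) (1/R) \<longrightarrow> \<mu> w = 0) \<and>
       (AE w in lebesgue. cmod (\<mu> w) \<le> 1)
       \<longrightarrow>
       1 / (2 * pi) * integral {0..2*pi} (\<lambda>t. (cmod (beurling \<mu> (cis t)))\<^sup>2)
         \<le> (1 + \<delta>) * ln (1 / (R - 1)) + K)"
proof (intro allI impI exI[of _ 1])
  fix \<delta> R :: real and \<mu> :: "complex \<Rightarrow> complex"
  assume "0 < \<delta> \<and> \<delta> < 1"
    and "1 < R \<and> R < 2 \<and> \<mu> \<in> borel_measurable lebesgue \<and>
      (AE w in lebesgue. w \<notin> annulus (1/2) (1/R) \<longrightarrow> \<mu> w = 0) \<and> (AE w in lebesgue. cmod (\<mu> w) \<le> 1)"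
  then have \<delta>: "0 < \<delta>" and R: "1 < R" "R < 2" and \<mu>: "\<mu> \<in> borel_measurable lebesgue"
    and support: "AE w in lebesgue. w \<notin> annulus (1/2) (1/R) \<longrightarrow> \<mu> w = 0"
    and bounded: "AE w in lebesgue. cmod (\<mu> w) \<le> 1"
    by auto
  \<comment> \<open>a representative of \<open>\<mu>\<close> satisfying the hypotheses everywhere, not just almost everywhere\<close>
  define \<nu> where "\<nu> w = (if cmod w < 1 / R \<and> cmod (\<mu> w) \<le> 1 then \<mu> w else 0)" for w
  have "(\<lambda>w::complex. w) \<in> borel_measurable lebesgue"
    by (rule borel_measurable_lebesgue_if_borel) simp
  with \<mu> have \<nu>_measurable: "\<nu> \<in> borel_measurable lebesgue"
    unfolding \<nu>_def by measurable
  interpret disc_supported_density \<nu> "1 / R"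
    using R \<nu>_measurable by unfold_locales (auto simp: \<nu>_def split: if_splits)
  have "AE w in lebesgue. \<mu> w = \<nu> w"
    using support bounded by eventually_elim (auto simp: \<nu>_def annulus_def)
  then have "beurling \<mu> = beurling \<nu>"
    using \<mu> \<nu>_measurable by (intro ext beurling_cong_AE)
  then have "1 / (2 * pi) * integral {0..2*pi} (\<lambda>t. (cmod (beurling \<mu> (cis t)))\<^sup>2) \<le> - ln (1 - (1 / R)\<^sup>2)"
    using beurling_circle_mean_square_le by simp
  also have "\<dots> \<le> ln (1 / (R - 1)) + 1"
    using R by (rule ln_annulus_width_bound)
  also have "ln (1 / (R - 1)) \<le> (1 + \<delta>) * ln (1 / (R - 1))"
    using R \<delta> by (simp add: algebra_simps)
  finally show "1 / (2 * pi) * integral {0..2*pi} (\<lambda>t. (cmod (beurling \<mu> (cis t)))\<^sup>2)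
      \<le> (1 + \<delta>) * ln (1 / (R - 1)) + 1"
    by simp
qed

end
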